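(* Let $n/2 \leq r\leq n$ and let $(\mathcal{S},\mathcal{T})$ be an $r$-maximal cross-intersecting pair in $\binom{[n]}{\leq r}$. For any integer $\ell\ge 0$ with $\ell \le r$ and $n-\ell \leq r$, \[|\mathcal{S}(n-\ell)|+ |\mathcal{T}(n-\ell)| + |\mathcal{S}(\ell)|+ |\mathcal{T}(\ell)| = 2 \binom{n}{\ell}.\]
   Context: $\binom{[n]}{\le r}$ is the set of subsets of $[n]=\{1,\dots,n\}$ of size at most $r$. A pair $(\mathcal{S},\mathcal{T})$ of non-empty families of non-empty subsets is cross-intersecting if $S\cap T\ne\emptyset$ for all $S\in\mathcal{S},T\in\mathcal{T}$; it is $r$-maximal (in $\binom{[n]}{\le r}$) if whenever $(\mathcal{V},\mathcal{W})$ is a cross-intersecting pair in $\binom{[n]}{\le r}$ with $\mathcal{S}\subseteq\mathcal{V}$, $\mathcal{T}\subseteq\mathcal{W}$, then $(\mathcal{V},\mathcal{W})=(\mathcal{S},\mathcal{T})$. For a family $\mathcal{B}$, $\mathcal{B}(\ell)=\{B\in\mathcal{B}:|B|=\ell\}$. *)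

theory Defs
  imports Main
begin

definition sets_le :: "nat \<Rightarrow> nat \<Rightarrow> nat set set" where
  "sets_le n r = {A. A \<subseteq> {1..n} \<and> card A \<le> r}"

definition cross_intersecting :: "'a set set \<Rightarrow> 'a set set \<Rightarrow> bool" where
  "cross_intersecting S T \<longleftrightarrow>
     S \<noteq> {} \<and> T \<noteq> {} \<and> (\<forall>A\<in>S. A \<noteq> {}) \<and> (\<forall>B\<in>T. B \<noteq> {}) \<and>
     (\<forall>A\<in>S. \<forall>B\<in>T. A \<inter> B \<noteq> {})"

definition r_maximal :: "nat \<Rightarrow> nat \<Rightarrow> nat set set \<Rightarrow> nat set set \<Rightarrow> bool" where
  "r_maximal n r S T \<longleftrightarrow>
     S \<subseteq> sets_le n r \<and> T \<subseteq> sets_le n r \<and> cross_intersecting S T \<and>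
     (\<forall>V W. V \<subseteq> sets_le n r \<and> W \<subseteq> sets_le n r \<and> cross_intersecting V W \<and>
            S \<subseteq> V \<and> T \<subseteq> W \<longrightarrow> V = S \<and> W = T)"

definition layer :: "'a set set \<Rightarrow> nat \<Rightarrow> 'a set set" where
  "layer B l = {A \<in> B. card A = l}"

end

theory Submission
  imports Defs
begin

text \<open>Fix an \<open>l\<close>-set \<open>A \<subseteq> [n]\<close>; both \<open>A\<close> and \<open>A' = [n] - A\<close> have size at most \<open>r\<close>.
  Exactly one of \<open>A \<in> S\<close> and \<open>A' \<in> T\<close> holds. Not both, as \<open>A\<close> and \<open>A'\<close> are disjoint.
  At least one: if \<open>A' \<notin> T\<close>, maximality forbids adding \<open>A'\<close> to \<open>T\<close>, so some member of \<open>S\<close>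
  misses \<open>A'\<close>, i.e. lies inside \<open>A\<close>; and maximality also makes \<open>S\<close> closed upwards, so
  \<open>A \<in> S\<close>. Counting the \<open>l\<close>-sets gives \<open>|S(l)| + |T(n - l)| = n choose l\<close>, and swapping the
  roles of \<open>S\<close> and \<open>T\<close> gives the other half of the sum.\<close>

lemma cross_intersecting_commute: "cross_intersecting S T \<longleftrightarrow> cross_intersecting T S"
  unfolding cross_intersecting_def by blast

lemma r_maximal_swap: "r_maximal n r S T \<Longrightarrow> r_maximal n r T S"
  unfolding r_maximal_def by (meson cross_intersecting_commute)

lemma r_maximal_sets_le:
  assumes "r_maximal n r S T"
  shows "S \<subseteq> sets_le n r" and "T \<subseteq> sets_le n r"
  using assms unfolding r_maximal_def by auto

lemma r_maximal_insert:
  assumes max: "r_maximal n r S T" and X: "X \<in> sets_le n r" "X \<noteq> {}"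
    and meets: "\<forall>B\<in>T. X \<inter> B \<noteq> {}"
  shows "X \<in> S"
proof -
  have "cross_intersecting (insert X S) T"
    using max X meets unfolding r_maximal_def cross_intersecting_def by auto
  moreover have "insert X S \<subseteq> sets_le n r"
    using X r_maximal_sets_le[OF max] by blast
  ultimately have "insert X S = S"
    using max unfolding r_maximal_def by blast
  then show ?thesis by blast
qed

lemma r_maximal_up_closed:
  assumes max: "r_maximal n r S T" and "A \<in> S" "A \<subseteq> X" "X \<in> sets_le n r"
  shows "X \<in> S"
proof (rule r_maximal_insert[OF max \<open>X \<in> sets_le n r\<close>])
  have "A \<noteq> {}" "\<forall>B\<in>T. A \<inter> B \<noteq> {}"
    using max \<open>A \<in> S\<close> unfolding r_maximal_def cross_intersecting_def by auto
  with \<open>A \<subseteq> X\<close> show "X \<noteq> {}" "\<forall>B\<in>T. X \<inter> B \<noteq> {}" by auto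
qed

lemma r_maximal_mem_iff_compl_notin:
  assumes max: "r_maximal n r S T" and X: "X \<in> sets_le n r" "{1..n} - X \<in> sets_le n r"
  shows "X \<in> S \<longleftrightarrow> {1..n} - X \<notin> T"
proof
  assume "X \<in> S"
  moreover have "X \<inter> ({1..n} - X) = {}" by blast
  ultimately show "{1..n} - X \<notin> T"
    using max unfolding r_maximal_def cross_intersecting_def by metis
next
  assume "{1..n} - X \<notin> T"
  have ci: "cross_intersecting S T"
    using max unfolding r_maximal_def by blast
  have "\<exists>A\<in>S. A \<inter> ({1..n} - X) = {}"
  proof (cases "{1..n} - X = {}")
    case True
    then show ?thesis using ci unfolding cross_intersecting_def by auto
  next
    case False
    with \<open>{1..n} - X \<notin> T\<close> show ?thesis
      using r_maximal_insert[OF r_maximal_swap[OF max] X(2)] by (auto simp: Int_commute)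
  qed
  then obtain A where "A \<in> S" "A \<inter> ({1..n} - X) = {}" by blast
  moreover have "A \<subseteq> {1..n}"
    using \<open>A \<in> S\<close> r_maximal_sets_le[OF max] unfolding sets_le_def by blast
  ultimately have "A \<subseteq> X" by blast
  then show "X \<in> S"
    using r_maximal_up_closed[OF max \<open>A \<in> S\<close> _ X(1)] by blast
qed

lemma card_layer_compl:
  assumes "finite U" "B \<subseteq> Pow U" "l \<le> card U"
  shows "card (layer B (card U - l)) = card {A \<in> Pow U. card A = l \<and> U - A \<in> B}"
proof -
  have "bij_betw ((-) U) {A \<in> Pow U. card A = l \<and> U - A \<in> B} (layer B (card U - l))"
  proof (rule bij_betw_imageI)
    show "inj_on ((-) U) {A \<in> Pow U. card A = l \<and> U - A \<in> B}"
      by (rule inj_onI) blast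
    have "X \<in> (-) U ` {A \<in> Pow U. card A = l \<and> U - A \<in> B}" if "X \<in> layer B (card U - l)" for X
    proof
      have "X \<subseteq> U" "card X = card U - l" "X \<in> B"
        using that assms(2) unfolding layer_def by auto
      then show "U - X \<in> {A \<in> Pow U. card A = l \<and> U - A \<in> B}"
        using assms by (auto simp: card_Diff_subset finite_subset double_diff)
      show "X = U - (U - X)" using \<open>X \<subseteq> U\<close> by auto
    qed
    then show "(-) U ` {A \<in> Pow U. card A = l \<and> U - A \<in> B} = layer B (card U - l)"
      using assms(1) by (auto simp: layer_def card_Diff_subset finite_subset)
  qed
  then show ?thesis by (simp add: bij_betw_same_card)
qed

lemma r_maximal_card_layer_add:
  assumes max: "r_maximal n r S T" and "l \<le> r" "n - l \<le> r" "l \<le> n"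
  shows "card (layer S l) + card (layer T (n - l)) = n choose l"
proof -
  define L where "L = {A \<in> Pow {1..n}. card A = l}"
  have subsets: "S \<subseteq> Pow {1..n}" "T \<subseteq> Pow {1..n}"
    using r_maximal_sets_le[OF max] unfolding sets_le_def by auto
  have "layer S l = L \<inter> S"
    using subsets unfolding layer_def L_def by blast
  moreover have "card (layer T (n - l)) = card (L - S)"
  proof -
    have "{A \<in> Pow {1..n}. card A = l \<and> {1..n} - A \<in> T} = L - S"
      using r_maximal_mem_iff_compl_notin[OF max] assms(2,3)
      by (auto simp: L_def sets_le_def card_Diff_subset finite_subset)
    then show ?thesis
      using card_layer_compl[of "{1..n}" T l] subsets \<open>l \<le> n\<close> by simp
  qed
  moreover have "card L = n choose l"
    unfolding L_def using n_subsets[of "{1..n}" l] by simp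
  ultimately show ?thesis
    using card_Int_Diff[of L S] unfolding L_def by simp
qed

theorem lemma5p1:
  fixes n r l :: nat and S T :: "nat set set"
  assumes "n \<le> 2 * r" and "r \<le> n"
    and "r_maximal n r S T"
    and "l \<le> r" and "n - l \<le> r"
  shows "card (layer S (n - l)) + card (layer T (n - l)) + card (layer S l) + card (layer T l)
         = 2 * (n choose l)"
proof -
  have "l \<le> n" using assms by simp
  have "card (layer S l) + card (layer T (n - l)) = n choose l"
    using r_maximal_card_layer_add[OF assms(3-5) \<open>l \<le> n\<close>] .
  moreover have "card (layer T l) + card (layer S (n - l)) = n choose l"
    using r_maximal_card_layer_add[OF r_maximal_swap[OF assms(3)] assms(4,5) \<open>l \<le> n\<close>] .
  ultimately show ?thesis by simp
qed

end
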